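(* Let $K(x,y)=\prod_{i=1}^d K_i(x,y)$ with $K_i(x,y)=h(|x_i-y_i|)$ be a distance-based product kernel on $\mathbb{R}^d$, where $h:[0,\infty)\to\mathbb{R}$ is decreasing with $h(0)=1$ and each $K_i$ is a (positive definite) kernel. Let $X\subset\mathbb{R}^d$ be a finite dataset partitioned into $k$ nonempty clusters $C_1,\dots,C_k$. Let $\mathrm{cost}$ denote the kernel $k$-means cost with respect to $K$ and $\mathrm{cost}_i$ the kernel $k$-means cost with respect to $K_i$ (equivalently, with respect to a feature map $\phi_i$ of $K_i$). Then $$\mathrm{cost}(C_1,\dots,C_k)\le\sum_{i=1}^d\mathrm{cost}_i(C_1,\dots,C_k)\le d\cdot\mathrm{cost}(C_1,\dots,C_k).$$
   Context: For a kernel $\kappa$ with feature map $\psi$ and partition $C_1,\dots,C_k$ of $X$, the kernel $k$-means cost is $\sum_l\sum_{x\in C_l}\|\psi(x)-\frac{1}{|C_l|}\sum_{y\in C_l}\psi(y)\|^2=\sum_{x\in X}\kappa(x,x)-\sum_l\frac{1}{|C_l|}\sum_{x,y\in C_l}\kappa(x,y)$. Here $K_i$ acts on the $i$-th coordinates only. *)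

theory Defs
  imports "HOL-Analysis.Analysis"
begin

definition pd_kernel :: "('a \<Rightarrow> 'a \<Rightarrow> real) \<Rightarrow> bool" where
  "pd_kernel \<kappa> \<longleftrightarrow> (\<forall>x y. \<kappa> x y = \<kappa> y x) \<and>
     (\<forall>(n::nat) (p::nat \<Rightarrow> 'a) (c::nat \<Rightarrow> real).
        (\<Sum>a<n. \<Sum>b<n. c a * c b * \<kappa> (p a) (p b)) \<ge> 0)"

definition kmeans_cost :: "('a \<Rightarrow> 'a \<Rightarrow> real) \<Rightarrow> nat \<Rightarrow> (nat \<Rightarrow> 'a set) \<Rightarrow> real" where
  "kmeans_cost \<kappa> k C =
     (\<Sum>l<k. (\<Sum>x\<in>C l. \<kappa> x x) - (1 / real (card (C l))) * (\<Sum>x\<in>C l. \<Sum>y\<in>C l. \<kappa> x y))"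

definition coord_kernel :: "(real \<Rightarrow> real) \<Rightarrow> 'd \<Rightarrow> real^'d \<Rightarrow> real^'d \<Rightarrow> real" where
  "coord_kernel h i x y = h \<bar>x $ i - y $ i\<bar>"

definition prod_kernel :: "(real \<Rightarrow> real) \<Rightarrow> real^'d::finite \<Rightarrow> real^'d \<Rightarrow> real" where
  "prod_kernel h x y = (\<Prod>i\<in>UNIV. coord_kernel h i x y)"

end

theory Submission
  imports Defs
begin

text \<open>
  Each coordinate kernel takes values in [0,1] and equals 1 on the diagonal (nonnegativity of h
  is forced by positive definiteness, since arbitrarily many points can be placed pairwise at
  distance at least t). For numbers a_1, ..., a_d in [0,1] one has
  d * prod a_i \<le> sum a_i \<le> prod a_i + (d - 1), the second inequality being Weierstrass' product
  inequality. The k-means cost is linear in the kernel, vanishes on constant kernels, and is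
  antitone in the off-diagonal values of the kernel; so these pointwise inequalities between
  kernels with the same diagonal transfer to the costs. This argument works for any family of
  clusters.
\<close>

lemma kmeans_cost_add:
  "kmeans_cost (\<lambda>x y. \<kappa> x y + \<kappa>' x y) k C = kmeans_cost \<kappa> k C + kmeans_cost \<kappa>' k C"
  unfolding kmeans_cost_def sum.distrib[symmetric]
  by (rule sum.cong) (simp_all add: sum.distrib algebra_simps)

lemma kmeans_cost_sum:
  "kmeans_cost (\<lambda>x y. \<Sum>i\<in>I. \<kappa> i x y) k C = (\<Sum>i\<in>I. kmeans_cost (\<kappa> i) k C)"
  by (induction I rule: infinite_finite_induct) (simp_all add: kmeans_cost_add kmeans_cost_def)

lemma kmeans_cost_scale:
  "kmeans_cost (\<lambda>x y. c * \<kappa> x y) k C = c * kmeans_cost \<kappa> k C"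
  unfolding kmeans_cost_def
  by (simp add: sum_distrib_left right_diff_distrib mult.left_commute)

lemma kmeans_cost_add_const:
  "kmeans_cost (\<lambda>x y. \<kappa> x y + c) k C = kmeans_cost \<kappa> k C"
  unfolding kmeans_cost_def
proof (rule sum.cong[OF refl])
  fix l
  show "(\<Sum>x\<in>C l. \<kappa> x x + c) - 1 / real (card (C l)) * (\<Sum>x\<in>C l. \<Sum>y\<in>C l. \<kappa> x y + c) =
        (\<Sum>x\<in>C l. \<kappa> x x) - 1 / real (card (C l)) * (\<Sum>x\<in>C l. \<Sum>y\<in>C l. \<kappa> x y)"
    by (cases "card (C l) = 0") (simp_all add: sum.distrib field_simps)
qed

lemma kmeans_cost_antimono:
  assumes "\<And>x. \<kappa>' x x = \<kappa> x x" and "\<And>x y. \<kappa> x y \<le> \<kappa>' x y"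
  shows "kmeans_cost \<kappa>' k C \<le> kmeans_cost \<kappa> k C"
  unfolding kmeans_cost_def assms(1)
  by (intro sum_mono diff_left_mono mult_left_mono) (simp_all add: assms(2))

lemma one_minus_prod_le_sum:
  fixes f :: "'a \<Rightarrow> real"
  assumes "\<And>i. i \<in> I \<Longrightarrow> 0 \<le> f i \<and> f i \<le> 1"
  shows "1 - prod f I \<le> (\<Sum>i\<in>I. 1 - f i)"
  using assms
proof (induction I rule: infinite_finite_induct)
  case (insert a F)
  have "0 \<le> prod f F" "prod f F \<le> 1"
    using insert.prems by (auto intro: prod_nonneg prod_le_1)
  moreover have "0 \<le> f a" "f a \<le> 1"
    using insert.prems by auto
  ultimately have "0 \<le> (1 - f a) * (1 - prod f F)"
    by simp
  then have "1 - f a * prod f F \<le> (1 - f a) + (1 - prod f F)"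
    by (simp add: algebra_simps)
  with insert show ?case
    by simp
qed simp_all

lemma prod_le_factor:
  fixes f :: "'a \<Rightarrow> real"
  assumes "finite I" "i \<in> I" "\<And>j. j \<in> I \<Longrightarrow> 0 \<le> f j \<and> f j \<le> 1"
  shows "prod f I \<le> f i"
proof -
  have "prod f I = f i * prod f (I - {i})"
    using assms(1,2) by (simp add: prod.remove)
  moreover have "0 \<le> prod f (I - {i})" "prod f (I - {i}) \<le> 1"
    using assms(3) by (auto intro: prod_nonneg prod_le_1)
  ultimately show ?thesis
    using assms(2,3) by (simp add: mult_left_le)
qed

lemma pd_kernel_offdiag_bound_nonneg:
  fixes p :: "nat \<Rightarrow> 'a"
  assumes pd: "pd_kernel \<kappa>"
    and diag: "\<And>a. \<kappa> (p a) (p a) \<le> D"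
    and offdiag: "\<And>a b. a \<noteq> b \<Longrightarrow> \<kappa> (p a) (p b) \<le> c"
  shows "0 \<le> c"
proof (rule ccontr)
  assume "\<not> 0 \<le> c"
  then obtain m :: nat where "D < real m * - c"
    using reals_Archimedean3[of "- c"] by auto
  then have m: "D + real m * c < 0"
    by simp
  define n where "n = Suc m"
  have row: "(\<Sum>b<n. \<kappa> (p a) (p b)) \<le> D + real m * c" if "a < n" for a
  proof -
    have "(\<Sum>b<n. \<kappa> (p a) (p b)) = \<kappa> (p a) (p a) + (\<Sum>b\<in>{..<n} - {a}. \<kappa> (p a) (p b))"
      using that by (simp add: sum.remove)
    also have "\<dots> \<le> D + (\<Sum>b\<in>{..<n} - {a}. c)"
      using diag offdiag by (intro add_mono sum_mono) auto
    also have "(\<Sum>b\<in>{..<n} - {a}. c) = real m * c"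
      using that by (simp add: n_def)
    finally show ?thesis .
  qed
  have "0 \<le> (\<Sum>a<n. \<Sum>b<n. \<kappa> (p a) (p b))"
    using pd[unfolded pd_kernel_def, THEN conjunct2, rule_format, where n = n and p = p and c = "\<lambda>_. 1"]
    by simp
  also have "\<dots> \<le> (\<Sum>a<n. D + real m * c)"
    using row by (intro sum_mono) simp
  also have "\<dots> < 0"
    using m by (simp add: n_def mult_pos_neg)
  finally show False
    by simp
qed

lemma coord_kernel_nonneg:
  fixes h :: "real \<Rightarrow> real"
  assumes h_dec: "\<And>a b. 0 \<le> a \<Longrightarrow> a \<le> b \<Longrightarrow> h b \<le> h a"
    and h0: "h 0 = 1"
    and pd: "pd_kernel (coord_kernel h i :: real^'d::finite \<Rightarrow> real^'d \<Rightarrow> real)"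
  shows "0 \<le> coord_kernel h i x y"
proof -
  have "0 \<le> h t" if "0 \<le> t" for t
  proof (rule pd_kernel_offdiag_bound_nonneg[OF pd])
    show "coord_kernel h i (\<chi> j. real a * t) (\<chi> j. real a * t) \<le> 1" for a
      by (simp add: coord_kernel_def h0)
    show "coord_kernel h i (\<chi> j. real a * t) (\<chi> j. real b * t) \<le> h t" if "a \<noteq> b" for a b
    proof -
      have "1 \<le> \<bar>real a - real b\<bar>"
        using that by linarith
      then have "t \<le> \<bar>real a * t - real b * t\<bar>"
        using \<open>0 \<le> t\<close> mult_right_mono[of 1 "\<bar>real a - real b\<bar>" t]
        by (simp add: abs_mult left_diff_distrib[symmetric])
      then show ?thesis
        unfolding coord_kernel_def using h_dec \<open>0 \<le> t\<close> by simp
    qed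
  qed
  then show ?thesis
    unfolding coord_kernel_def by simp
qed

theorem lemma3:
  fixes h :: "real \<Rightarrow> real" and X :: "(real^'d::finite) set"
    and C :: "nat \<Rightarrow> (real^'d) set" and k :: nat
  assumes h_dec: "\<And>a b. 0 \<le> a \<Longrightarrow> a \<le> b \<Longrightarrow> h b \<le> h a"
    and h0: "h 0 = 1"
    and pd: "\<And>i. pd_kernel (coord_kernel h i :: real^'d \<Rightarrow> real^'d \<Rightarrow> real)"
    and finX: "finite X"
    and part_cover: "(\<Union>l<k. C l) = X"
    and part_disj: "\<And>l m. l < k \<Longrightarrow> m < k \<Longrightarrow> l \<noteq> m \<Longrightarrow> C l \<inter> C m = {}"
    and part_ne: "\<And>l. l < k \<Longrightarrow> C l \<noteq> {}"
  shows "kmeans_cost (prod_kernel h) k C \<le> (\<Sum>i\<in>UNIV. kmeans_cost (coord_kernel h i) k C)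
    \<and> (\<Sum>i\<in>UNIV. kmeans_cost (coord_kernel h i) k C)
        \<le> real CARD('d) * kmeans_cost (prod_kernel h) k C"
proof
  let ?K = "\<lambda>x y. \<Sum>i\<in>UNIV. coord_kernel h i x y"
  have bounds: "0 \<le> coord_kernel h i x y \<and> coord_kernel h i x y \<le> 1" for i and x y :: "real^'d"
    using coord_kernel_nonneg[OF h_dec h0 pd] h_dec[of 0] h0 by (simp add: coord_kernel_def)
  have diag: "coord_kernel h i x x = 1" "prod_kernel h x x = 1" for i x
    by (simp_all add: coord_kernel_def prod_kernel_def h0)
  have weierstrass: "?K x y + (1 - real CARD('d)) \<le> prod_kernel h x y" for x y :: "real^'d"
    using one_minus_prod_le_sum[of UNIV "\<lambda>i. coord_kernel h i x y"] bounds
    by (simp add: prod_kernel_def sum_subtractf)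
  have "kmeans_cost (prod_kernel h) k C \<le> kmeans_cost (\<lambda>x y. ?K x y + (1 - real CARD('d))) k C"
    by (rule kmeans_cost_antimono) (simp_all add: diag weierstrass)
  also have "\<dots> = (\<Sum>i\<in>UNIV. kmeans_cost (coord_kernel h i) k C)"
    by (simp only: kmeans_cost_add_const kmeans_cost_sum)
  finally show "kmeans_cost (prod_kernel h) k C \<le> (\<Sum>i\<in>UNIV. kmeans_cost (coord_kernel h i) k C)" .
  have "(\<Sum>i\<in>UNIV. kmeans_cost (coord_kernel h i) k C) = kmeans_cost ?K k C"
    by (simp only: kmeans_cost_sum)
  also have "\<dots> \<le> kmeans_cost (\<lambda>x y. real CARD('d) * prod_kernel h x y) k C"
  proof (rule kmeans_cost_antimono)
    show "real CARD('d) * prod_kernel h x y \<le> ?K x y" for x y :: "real^'d"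
      using prod_le_factor[of UNIV _ "\<lambda>i. coord_kernel h i x y"] bounds
      by (intro sum_bounded_below) (simp add: prod_kernel_def)
  qed (simp add: diag)
  also have "\<dots> = real CARD('d) * kmeans_cost (prod_kernel h) k C"
    by (rule kmeans_cost_scale)
  finally show "(\<Sum>i\<in>UNIV. kmeans_cost (coord_kernel h i) k C) \<le> real CARD('d) * kmeans_cost (prod_kernel h) k C" .
qed

end
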